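(* Let $a'=2/\alpha-a-2$ and $p_0'=p_0-1+\alpha(a+1)$. Then for every partition $\lambda$, $$L_\lambda(\alpha,p_0',a',\nu)=L_\lambda(\alpha,p_0,a,\nu),$$ where the left side means the Laguerre symmetric function with its coefficients (rational functions of $p_0$ and $a$) evaluated at $p_0\mapsto p_0'$, $a\mapsto a'$.
   Context: Let $a,\alpha,p_0$ be independent indeterminates and $\nu$ a nonzero parameter not depending on $a,p_0$ (e.g. $\nu\in\mathbb Q(\alpha)^\times$). Work in $\Lambda=\mathbf K[p_1,p_2,\dots]$, $\mathbf K=\mathbb Q(a,\alpha,\nu)(p_0)$, the ring of symmetric functions ($p_r$ power sums; $p_0$ the scalar). $\partial(p_r)$ is the derivation with $\partial(p_r)p_s=\delta_{rs}$; $E^\ell=\sum_{r\ge1}rp_{r+\ell-1}\partial(p_r)$; $D^1=\sum_{r,q\ge1}rq\,p_{r+q-1}\partial(p_r)\partial(p_q)+\sum_{r\ge2}r(r-1)p_{r-1}\partial(p_r)+\frac1\alpha\sum_{r\ge1}r\sum_{m=0}^{r-1}(p_{r-1-m}p_m-p_{r-1})\partial(p_r)$. $P_\lambda$ is the Jack symmetric function with parameter $\alpha$ (coefficient of $m_\lambda$ equal to $1$). The Laguerre symmetric function $L_\lambda(\alpha,p_0,a,\nu)$ is the unique element with $L_\lambda=P_\lambda+\sum_{\mu\subset\lambda}u_{\lambda\mu}P_\mu$ (proper diagram inclusion, $u_{\lambda\mu}$ scalars) and $(D^1+(a+1)E^0-\nu E^1)L_\lambda=-\nu|\lambda|L_\lambda$.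 *)

theory Defs
  imports "HOL-Library.Multiset" "HOL-Library.FuncSet"
    "HOL-Computational_Algebra.Polynomial" "HOL-Computational_Algebra.Fraction_Field"
begin

definition up :: "'a::idom \<Rightarrow> 'a poly fract" where
  "up c = Fract [:c:] 1"

definition varX :: "'a::idom poly fract" where
  "varX = Fract [:0, 1:] 1"

type_synonym QA = "rat poly fract"        (* Q(alpha) *)
type_synonym QAN = "QA poly fract"        (* Q(alpha, nu0) : the field where nu lives *)
type_synonym QANA = "QAN poly fract"      (* Q(alpha, nu0, a) *)
type_synonym KK = "QANA poly fract"       (* K = Q(a, alpha, nu0)(p0) *)

definition alphaK :: KK where "alphaK = up (up (up varX))"
definition aK :: KK where "aK = up varX"
definition p0K :: KK where "p0K = varX"
definition embN :: "QAN \<Rightarrow> KK" where "embN c = up (up c)"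

definition is_partition :: "nat multiset \<Rightarrow> bool" where
  "is_partition la \<longleftrightarrow> 0 \<notin># la"

definition parts :: "nat multiset \<Rightarrow> nat list" where
  "parts la = rev (sorted_list_of_multiset la)"

definition part :: "nat multiset \<Rightarrow> nat \<Rightarrow> nat" where
  "part la i = (if i < size la then parts la ! i else 0)"

definition dom_le :: "nat multiset \<Rightarrow> nat multiset \<Rightarrow> bool" where
  "dom_le mu la \<longleftrightarrow> sum_mset mu = sum_mset la \<and>
     (\<forall>k. (\<Sum>i<k. part mu i) \<le> (\<Sum>i<k. part la i))"

definition subdiag :: "nat multiset \<Rightarrow> nat multiset \<Rightarrow> bool" where
  "subdiag mu la \<longleftrightarrow> (\<forall>i. part mu i \<le> part la i)"

text \<open>An element of Lambda is given by its coefficients f mu of p_mu = p_mu1 p_mu2 ...\<close>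
type_synonym 'k sf = "nat multiset \<Rightarrow> 'k"

definition in_Lambda :: "'k::field sf \<Rightarrow> bool" where
  "in_Lambda f \<longleftrightarrow> finite {nu. f nu \<noteq> 0} \<and> (\<forall>nu. f nu \<noteq> 0 \<longrightarrow> is_partition nu)"

definition sfadd :: "'k::field sf \<Rightarrow> 'k sf \<Rightarrow> 'k sf" where
  "sfadd f g = (\<lambda>nu. f nu + g nu)"

definition sfscale :: "'k::field \<Rightarrow> 'k sf \<Rightarrow> 'k sf" where
  "sfscale c f = (\<lambda>nu. c * f nu)"

definition sfsum :: "'b set \<Rightarrow> ('b \<Rightarrow> 'k::field sf) \<Rightarrow> 'k sf" where
  "sfsum A F = (\<lambda>nu. \<Sum>x\<in>A. F x nu)"

definition sfmult :: "'k::field sf \<Rightarrow> 'k sf \<Rightarrow> 'k sf" where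
  "sfmult f g = (\<lambda>nu. \<Sum>mu\<in>{mu. mu \<subseteq># nu}. f mu * g (nu - mu))"

text \<open>power sum p_r, where p_0 is the scalar p0\<close>
definition psum :: "'k::field \<Rightarrow> nat \<Rightarrow> 'k sf" where
  "psum p0 r = (if r = 0 then (\<lambda>nu. if nu = {#} then p0 else 0)
                else (\<lambda>nu. if nu = {#r#} then 1 else 0))"

text \<open>the derivation d/dp_r\<close>
definition dP :: "nat \<Rightarrow> 'k::field sf \<Rightarrow> 'k sf" where
  "dP r f = (\<lambda>nu. of_nat (count nu r + 1) * f (nu + {#r#}))"

text \<open>indices r >= 1 with d/dp_r f possibly nonzero (all other terms of the sums vanish)\<close>
definition partsupp :: "'k::field sf \<Rightarrow> nat set" where
  "partsupp f = {r. 0 < r \<and> (\<exists>nu. f nu \<noteq> 0 \<and> r \<in># nu)}"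

definition opE :: "'k::field \<Rightarrow> nat \<Rightarrow> 'k sf \<Rightarrow> 'k sf" where
  "opE p0 l f = sfsum (partsupp f)
     (\<lambda>r. sfscale (of_nat r) (sfmult (psum p0 (r + l - 1)) (dP r f)))"

definition opD1 :: "'k::field \<Rightarrow> 'k \<Rightarrow> 'k sf \<Rightarrow> 'k sf" where
  "opD1 alpha p0 f =
     sfadd (sfadd
       (sfsum (partsupp f \<times> partsupp f)
          (\<lambda>(r, q). sfscale (of_nat (r * q)) (sfmult (psum p0 (r + q - 1)) (dP r (dP q f)))))
       (sfsum {r \<in> partsupp f. 2 \<le> r}
          (\<lambda>r. sfscale (of_nat (r * (r - 1))) (sfmult (psum p0 (r - 1)) (dP r f)))))
     (sfscale (1 / alpha)
       (sfsum (partsupp f)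
          (\<lambda>r. sfscale (of_nat r)
             (sfsum {0..<r}
                (\<lambda>m. sfmult (sfadd (sfmult (psum p0 (r - 1 - m)) (psum p0 m))
                                   (sfscale (-1) (psum p0 (r - 1))))
                           (dP r f))))))"

text \<open>coefficient of m_la in p_mu = coefficient of x^la in p_mu\<close>
definition pm_coeff :: "nat multiset \<Rightarrow> nat multiset \<Rightarrow> nat" where
  "pm_coeff mu la = card {phi \<in> {0..<size mu} \<rightarrow>\<^sub>E {0..<size la}.
      \<forall>j < size la. (\<Sum>i\<in>{i. i < size mu \<and> phi i = j}. parts mu ! i) = parts la ! j}"

definition mcoeff :: "'k::field sf \<Rightarrow> nat multiset \<Rightarrow> 'k" where
  "mcoeff f la = (\<Sum>mu\<in>{mu. f mu \<noteq> 0}. f mu * of_nat (pm_coeff mu la))"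

definition zee :: "nat multiset \<Rightarrow> nat" where
  "zee mu = (\<Prod>i\<in>set_mset mu. i ^ count mu i * fact (count mu i))"

definition sprod :: "'k::field \<Rightarrow> 'k sf \<Rightarrow> 'k sf \<Rightarrow> 'k" where
  "sprod alpha f g = (\<Sum>mu\<in>{mu. f mu \<noteq> 0}. f mu * g mu * of_nat (zee mu) * alpha ^ size mu)"

definition jack_family :: "'k::field \<Rightarrow> (nat multiset \<Rightarrow> 'k sf) \<Rightarrow> bool" where
  "jack_family alpha P \<longleftrightarrow>
     (\<forall>la. \<not> is_partition la \<longrightarrow> P la = (\<lambda>_. 0)) \<and>
     (\<forall>la. is_partition la \<longrightarrow> in_Lambda (P la) \<and> mcoeff (P la) la = 1 \<and>
        (\<forall>mu. is_partition mu \<and> mcoeff (P la) mu \<noteq> 0 \<longrightarrow> dom_le mu la)) \<and>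
     (\<forall>la mu. is_partition la \<and> is_partition mu \<and> la \<noteq> mu \<longrightarrow> sprod alpha (P la) (P mu) = 0)"

definition jackP :: "'k::field \<Rightarrow> nat multiset \<Rightarrow> 'k sf" where
  "jackP alpha = (THE P. jack_family alpha P)"

definition lag_op :: "'k::field \<Rightarrow> 'k \<Rightarrow> 'k \<Rightarrow> 'k \<Rightarrow> 'k sf \<Rightarrow> 'k sf" where
  "lag_op alpha p0 a nu f =
     sfadd (sfadd (opD1 alpha p0 f) (sfscale (a + 1) (opE p0 0 f))) (sfscale (- nu) (opE p0 1 f))"

definition laguerre :: "'k::field \<Rightarrow> 'k \<Rightarrow> 'k \<Rightarrow> 'k \<Rightarrow> nat multiset \<Rightarrow> 'k sf" where
  "laguerre alpha p0 a nu la = (THE L. in_Lambda L \<and>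
     (\<exists>u. L = sfadd (jackP alpha la)
                (sfsum {mu. is_partition mu \<and> subdiag mu la \<and> mu \<noteq> la}
                   (\<lambda>mu. sfscale (u mu) (jackP alpha mu)))) \<and>
     lag_op alpha p0 a nu L = sfscale (- nu * of_nat (sum_mset la)) L)"

end

theory Submission
  imports Defs
begin

text \<open>In the power-sum basis, \<open>p0\<close> enters \<open>D1 + (a+1) E0 - \<nu> E1\<close> only through the summands
  \<open>m = 0\<close> and \<open>m = r - 1\<close> of the \<open>1/\<alpha>\<close> part of \<open>D1\<close> and the summand \<open>r = 1\<close> of \<open>E0\<close>.
  Collected, they contribute \<open>(p0\<^sup>2 - p0)/\<alpha> + (a+1) p0\<close> times \<open>\<partial>(p1)\<close> and, up to
  \<open>p0\<close>-free terms, \<open>2(p0 - 1)/\<alpha> + a + 1\<close> times \<open>r p(r-1) \<partial>(pr)\<close> for \<open>r \<ge> 2\<close>. Both coefficients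
  are invariant under \<open>(p0, a) \<mapsto> (p0 - 1 + \<alpha>(a+1), 2/\<alpha> - a - 2)\<close>, so the operator, and with
  it the eigenvalue problem characterising \<open>L\<lambda>\<close>, does not change.\<close>

lemma finite_submultisets: "finite {M. M \<subseteq># (N::'a multiset)}"
proof -
  have "{M. M \<subseteq># N} \<subseteq> (\<Union>n\<in>{0..size N}. multisets_of_size (set_mset N) n)"
    by (auto simp: multisets_of_size_def mset_subset_eqD size_mset_mono)
  then show ?thesis by (rule finite_subset) auto
qed

lemma sfadd_assoc: "sfadd (sfadd f g) h = sfadd f (sfadd g h)"
  by (rule ext) (simp add: sfadd_def add.assoc)

lemma sfmult_sfadd_left: "sfmult (sfadd f g) h = sfadd (sfmult f h) (sfmult g h)"
  by (rule ext) (simp add: sfmult_def sfadd_def algebra_simps sum.distrib)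

lemma sfmult_sfscale_left: "sfmult (sfscale c f) h = sfscale c (sfmult f h)"
  by (rule ext) (simp add: sfmult_def sfscale_def sum_distrib_left mult.assoc)

lemma sfmult_psum_0_left: "sfmult (psum p0 0) h = sfscale p0 h"
proof (rule ext)
  fix N
  have "sfmult (psum p0 0) h N = (\<Sum>M\<in>{M. M \<subseteq># N}. if M = {#} then p0 * h (N - M) else 0)"
    unfolding sfmult_def psum_def by (intro sum.cong) auto
  also have "\<dots> = p0 * h N" using finite_submultisets[of N] by simp
  finally show "sfmult (psum p0 0) h N = sfscale p0 h N" by (simp add: sfscale_def)
qed

lemma sfmult_psum_0_right: "sfmult f (psum p0 0) = sfscale p0 f"
proof (rule ext)
  fix N
  have "sfmult f (psum p0 0) N = (\<Sum>M\<in>{M. M \<subseteq># N}. if M = N then f M * p0 else 0)"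
    unfolding sfmult_def psum_def
    by (intro sum.cong) (auto simp: subset_mset.antisym_conv2 Diff_eq_empty_iff_mset
        dest: subset_mset.antisym)
  also have "\<dots> = f N * p0" using finite_submultisets[of N] by simp
  finally show "sfmult f (psum p0 0) N = sfscale p0 f N" by (simp add: sfscale_def mult.commute)
qed

lemma psum_pos_indep: "0 < r \<Longrightarrow> psum p0 r = psum p0' r"
  by (simp add: psum_def)

definition psum_pair_term :: "'k::field \<Rightarrow> nat \<Rightarrow> 'k sf \<Rightarrow> 'k sf" where
  "psum_pair_term p0 r g = sfsum {0..<r}
     (\<lambda>m. sfmult (sfadd (sfmult (psum p0 (r - 1 - m)) (psum p0 m)) (sfscale (-1) (psum p0 (r - 1)))) g)"

lemma psum_pair_term_1: "psum_pair_term p0 1 g = sfscale (p0 * p0 - p0) g"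
  by (simp add: psum_pair_term_def sfsum_def sfmult_sfadd_left sfmult_sfscale_left
      sfmult_psum_0_left sfmult_psum_0_right)
    (simp add: sfadd_def sfscale_def algebra_simps)

lemma psum_pair_term_ge2:
  assumes "2 \<le> r"
  shows "psum_pair_term p0 r g
    = sfadd (psum_pair_term 0 r g) (sfscale (2 * p0) (sfmult (psum 0 (r - 1)) g))"
proof (rule ext)
  fix N
  define F where "F q m = sfmult (sfadd (sfmult (psum q (r - 1 - m)) (psum q m))
      (sfscale (-1) (psum q (r - 1)))) g N" for q :: 'a and m
  have split: "psum_pair_term q r g N = F q 0 + F q (r - 1) + (\<Sum>m\<in>{1..<r-1}. F q m)" for q
  proof -
    have "{0..<r} = insert 0 (insert (r - 1) {1..<r-1})" using assms by auto
    then show ?thesis using assms by (simp add: psum_pair_term_def sfsum_def F_def algebra_simps)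
  qed
  have inner: "(\<Sum>m\<in>{1..<r-1}. F p0 m) = (\<Sum>m\<in>{1..<r-1}. F 0 m)"
    by (intro sum.cong) (auto simp: F_def psum_def)
  have top: "psum q (r - 1) = psum 0 (r - 1)" for q :: 'a
    using assms by (intro psum_pos_indep) simp
  have ends: "F q 0 = (q - 1) * sfmult (psum 0 (r - 1)) g N"
    "F q (r - 1) = (q - 1) * sfmult (psum 0 (r - 1)) g N" for q
    using assms top[of q]
    by (simp_all add: F_def sfmult_sfadd_left sfmult_sfscale_left sfmult_psum_0_left
        sfmult_psum_0_right) (simp_all add: sfadd_def sfscale_def algebra_simps)
  show "psum_pair_term p0 r g N
      = sfadd (psum_pair_term 0 r g) (sfscale (2 * p0) (sfmult (psum 0 (r - 1)) g)) N"
    unfolding sfadd_def sfscale_def split[of p0] split[of 0] inner ends by (simp add: algebra_simps)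
qed

definition first_order_term :: "'k::field \<Rightarrow> 'k \<Rightarrow> 'k \<Rightarrow> nat \<Rightarrow> 'k sf \<Rightarrow> 'k sf" where
  "first_order_term alpha p0 a r g =
     sfadd (sfscale (1 / alpha) (psum_pair_term p0 r g))
       (sfscale (a + 1) (sfmult (psum p0 (r - 1)) g))"

definition lag_invariants :: "'k::field \<Rightarrow> 'k \<Rightarrow> 'k \<Rightarrow> 'k \<times> 'k" where
  "lag_invariants alpha p0 a =
     ((p0 * p0 - p0) / alpha + (a + 1) * p0, 2 * (p0 - 1) / alpha + (a + 1))"

lemma first_order_term_1:
  "first_order_term alpha p0 a 1 g = sfscale (fst (lag_invariants alpha p0 a)) g"
  unfolding first_order_term_def psum_pair_term_1
  by (rule ext) (simp add: sfmult_psum_0_left lag_invariants_def sfadd_def sfscale_def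
      algebra_simps diff_divide_distrib)

lemma first_order_term_ge2:
  assumes "2 \<le> r"
  shows "first_order_term alpha p0 a r g
    = sfadd (sfscale (1 / alpha) (sfadd (psum_pair_term 0 r g) (sfscale 2 (sfmult (psum 0 (r - 1)) g))))
        (sfscale (snd (lag_invariants alpha p0 a)) (sfmult (psum 0 (r - 1)) g))"
proof -
  have "psum p0 (r - 1) = psum 0 (r - 1)" using assms by (intro psum_pos_indep) simp
  then show ?thesis
    unfolding first_order_term_def psum_pair_term_ge2[OF assms, of p0]
    by (intro ext) (simp add: lag_invariants_def sfadd_def sfscale_def algebra_simps
        add_divide_distrib diff_divide_distrib)
qed

lemma first_order_term_eq_if_invariants_eq:
  assumes "lag_invariants alpha p0 a = lag_invariants alpha p0' a'" and "0 < r"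
  shows "first_order_term alpha p0 a r g = first_order_term alpha p0' a' r g"
proof (cases "r = 1")
  case True
  then show ?thesis using assms(1) by (simp only: first_order_term_1)
next
  case False
  then have "2 \<le> r" using assms(2) by simp
  then show ?thesis using assms(1) by (simp add: first_order_term_ge2)
qed

lemma opD1_opE0_first_order_terms:
  "sfadd (sfscale (1 / alpha) (sfsum (partsupp f) (\<lambda>r. sfscale (of_nat r) (psum_pair_term p0 r (dP r f)))))
      (sfscale (a + 1) (opE p0 0 f))
   = sfsum (partsupp f) (\<lambda>r. sfscale (of_nat r) (first_order_term alpha p0 a r (dP r f)))"
  by (rule ext) (simp add: sfadd_def sfscale_def sfsum_def opE_def first_order_term_def
      sum_distrib_left sum.distrib algebra_simps)

lemma lag_op_first_order_split:
  "lag_op alpha p0 a nu f =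
     sfadd (sfadd (sfadd
       (sfsum (partsupp f \<times> partsupp f)
          (\<lambda>(r, q). sfscale (of_nat (r * q)) (sfmult (psum p0 (r + q - 1)) (dP r (dP q f)))))
       (sfsum {r \<in> partsupp f. 2 \<le> r}
          (\<lambda>r. sfscale (of_nat (r * (r - 1))) (sfmult (psum p0 (r - 1)) (dP r f)))))
       (sfsum (partsupp f) (\<lambda>r. sfscale (of_nat r) (first_order_term alpha p0 a r (dP r f)))))
     (sfscale (- nu) (opE p0 1 f))"
  unfolding lag_op_def opD1_def psum_pair_term_def[symmetric]
    opD1_opE0_first_order_terms[symmetric] sfadd_assoc ..

lemma lag_op_eq_if_invariants_eq:
  assumes "lag_invariants alpha p0 a = lag_invariants alpha p0' a'"
  shows "lag_op alpha p0 a nu = lag_op alpha p0' a' nu"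
proof
  fix f :: "'a sf"
  have pos: "r \<in> partsupp f \<Longrightarrow> 0 < r" for r by (simp add: partsupp_def)
  have second_order:
    "sfsum (partsupp f \<times> partsupp f)
       (\<lambda>(r, q). sfscale (of_nat (r * q)) (sfmult (psum p0 (r + q - 1)) (dP r (dP q f))))
     = sfsum (partsupp f \<times> partsupp f)
       (\<lambda>(r, q). sfscale (of_nat (r * q)) (sfmult (psum p0' (r + q - 1)) (dP r (dP q f))))"
    unfolding sfsum_def by (intro ext sum.cong refl) (auto dest!: pos simp: psum_pos_indep[of _ p0 p0'])
  have diagonal:
    "sfsum {r \<in> partsupp f. 2 \<le> r}
       (\<lambda>r. sfscale (of_nat (r * (r - 1))) (sfmult (psum p0 (r - 1)) (dP r f)))
     = sfsum {r \<in> partsupp f. 2 \<le> r}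
       (\<lambda>r. sfscale (of_nat (r * (r - 1))) (sfmult (psum p0' (r - 1)) (dP r f)))"
    unfolding sfsum_def by (intro ext sum.cong refl) (auto simp: psum_pos_indep[of _ p0 p0'])
  have E1: "opE p0 1 f = opE p0' 1 f"
    unfolding opE_def sfsum_def
    by (intro ext sum.cong refl) (auto dest!: pos simp: psum_pos_indep[of _ p0 p0'])
  have first_order:
    "sfsum (partsupp f) (\<lambda>r. sfscale (of_nat r) (first_order_term alpha p0 a r (dP r f)))
     = sfsum (partsupp f) (\<lambda>r. sfscale (of_nat r) (first_order_term alpha p0' a' r (dP r f)))"
    unfolding sfsum_def
    by (intro ext sum.cong refl) (simp add: first_order_term_eq_if_invariants_eq[OF assms] pos)
  show "lag_op alpha p0 a nu f = lag_op alpha p0' a' nu f"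
    unfolding lag_op_first_order_split second_order diagonal E1 first_order ..
qed

lemma laguerre_eq_if_invariants_eq:
  assumes "lag_invariants alpha p0 a = lag_invariants alpha p0' a'"
  shows "laguerre alpha p0 a nu la = laguerre alpha p0' a' nu la"
  unfolding laguerre_def lag_op_eq_if_invariants_eq[OF assms] ..

lemma alphaK_nonzero: "alphaK \<noteq> 0"
  unfolding alphaK_def up_def varX_def by (simp add: Zero_fract_def eq_fract)

theorem proposition5p3:
  fixes nu :: QAN and la :: "nat multiset"
  assumes "nu \<noteq> 0" and "is_partition la"
  shows "laguerre alphaK (p0K - 1 + alphaK * (aK + 1)) (2 / alphaK - aK - 2) (embN nu) la
       = laguerre alphaK p0K aK (embN nu) la"
proof (rule laguerre_eq_if_invariants_eq)
  show "lag_invariants alphaK (p0K - 1 + alphaK * (aK + 1)) (2 / alphaK - aK - 2)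
      = lag_invariants alphaK p0K aK"
    using alphaK_nonzero by (simp add: lag_invariants_def field_simps; simp add: algebra_simps)
qed

end
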